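(* In the setting described in the context, define $\mathbf E\in\mathbb{R}^{n\times n}$ by $[\mathbf E]_{ij}=\frac1{2n_{s(i)}}\big([\boldsymbol\beta^{r(i)}_1(x_i)]_j-[\boldsymbol\beta^{r(i)}_0(x_i)]_j\big)$ for $j\ne i$ and $[\mathbf E]_{ii}=0$, and define $\mathbf C\in\mathbb{R}^{n\times n}$ by $[\mathbf C]_{ii}=\frac1{2n_{s(i)}}\big(\frac{a_i}{w_i}-\frac{1-a_i}{1-w_i}\big)$ and, for $j\ne i$, $[\mathbf C]_{ij}=\frac1{2n_{s(i)}}\big[(1-\frac{a_i}{w_i})[\boldsymbol\beta^{r(i)}_1(x_i)]_j+(\frac{1-a_i}{1-w_i}-1)[\boldsymbol\beta^{r(i)}_0(x_i)]_j\big]$. Then the cross-fitted plug-in estimator satisfies $\psi_n=\sum_{i,j\in[n]}[\mathbf E]_{ij}\Lambda_{x_i,y_j}$ and the cross-fitted one-step estimator satisfies $\bar\psi_n=\sum_{i,j\in[n]}[\mathbf C]_{ij}\Lambda_{x_i,y_j}$.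
   Context: $k,\ell$ kernels on $\mathcal{X},\mathcal{Y}$ with feature maps $K_x,L_y$; $\mathcal{H}$ the tensor-product RKHS with feature map $\Lambda_{x,y}=K_x\otimes L_y$. Data $z_i=(x_i,a_i,y_i)\in\mathcal{X}\times\{0,1\}\times\mathcal{Y}$, $i\in[n]$; $[n]$ is partitioned into folds $\mathcal{I}^1,\mathcal{I}^2$ of sizes $n_1,n_2$; $s(i)$ is the fold containing $i$ and $r(i)=3-s(i)$. For $r\in\{1,2\}$: propensity estimates $\pi^r_n:\mathcal{X}\to(0,1)$ and outcome models $\theta^r_{n,a}(x)=\sum_j[\boldsymbol\beta^r_a(x)]_j\Lambda_{x,y_j}$, $a\in\{0,1\}$, with $\boldsymbol\beta^r_a(x)\in\mathbb{R}^n$ and $[\boldsymbol\beta^r_a(x)]_j=0$ whenever $j\notin\mathcal{I}^r$ or $a_j\ne a$. $w_i=\pi_n^{r(i)}(x_i)$. With $s=3-r$ and $P_n^s$ the empirical distribution of $\{z_i:i\in\mathcal{I}^s\}$: the fold plug-in is $\psi^r_n=\mathbb{E}_{P_n^s}[\theta^r_{n,1}(X)-\theta^r_{n,0}(X)]$, the cross-fitted plug-in is $\psi_n=\frac12\sum_{r=1}^2\psi^r_n$; $\phi^r_n(x,a,y)=(\frac{a}{\pi^r_n(x)}-\frac{1-a}{1-\pi^r_n(x)})(\Lambda_{x,y}-\theta^r_{n,a}(x))+\theta^r_{n,1}(x)-\theta^r_{n,0}(x)-\psi^r_n$, and the cross-fitted one-step estimator is $\bar\psi_n=\frac12\sum_{r=1}^2(\psi^r_n+\mathbb{E}_{P_n^s}[\phi^r_n(Z)])$.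 *)

theory Defs
  imports "HOL-Analysis.Analysis"
begin

text \<open>Indices are 0..<n. The fold label of observation i is s i \<in> {1,2};
  fold k is {i. i < n \<and> s i = k}; the other fold of i is r(i) = 3 - s i.
  Treatment indicators are booleans (True = 1). The outcome-model weights are
  beta r a x j = [beta^r_a(x)]_j. The RKHS H is abstracted to an arbitrary real
  vector space, and Lambda x y is the feature map Lambda_{x,y}.\<close>

definition fold :: "(nat \<Rightarrow> nat) \<Rightarrow> nat \<Rightarrow> nat \<Rightarrow> nat set" where
  "fold s n k = {i. i < n \<and> s i = k}"

definition fsize :: "(nat \<Rightarrow> nat) \<Rightarrow> nat \<Rightarrow> nat \<Rightarrow> nat" where
  "fsize s n k = card (fold s n k)"

definition theta ::
  "('x \<Rightarrow> 'y \<Rightarrow> 'h::real_vector) \<Rightarrow> (nat \<Rightarrow> 'y) \<Rightarrow> nat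
   \<Rightarrow> (nat \<Rightarrow> bool \<Rightarrow> 'x \<Rightarrow> nat \<Rightarrow> real) \<Rightarrow> nat \<Rightarrow> bool \<Rightarrow> 'x \<Rightarrow> 'h" where
  "theta Lam y n beta r a x = (\<Sum>j<n. beta r a x j *\<^sub>R Lam x (y j))"

definition psi_fold ::
  "('x \<Rightarrow> 'y \<Rightarrow> 'h::real_vector) \<Rightarrow> (nat \<Rightarrow> 'x) \<Rightarrow> (nat \<Rightarrow> 'y) \<Rightarrow> (nat \<Rightarrow> nat) \<Rightarrow> nat
   \<Rightarrow> (nat \<Rightarrow> bool \<Rightarrow> 'x \<Rightarrow> nat \<Rightarrow> real) \<Rightarrow> nat \<Rightarrow> 'h" where
  "psi_fold Lam x y s n beta r =
     (1 / real (fsize s n (3 - r))) *\<^sub>R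
       (\<Sum>i\<in>fold s n (3 - r).
          theta Lam y n beta r True (x i) - theta Lam y n beta r False (x i))"

definition psi_cf ::
  "('x \<Rightarrow> 'y \<Rightarrow> 'h::real_vector) \<Rightarrow> (nat \<Rightarrow> 'x) \<Rightarrow> (nat \<Rightarrow> 'y) \<Rightarrow> (nat \<Rightarrow> nat) \<Rightarrow> nat
   \<Rightarrow> (nat \<Rightarrow> bool \<Rightarrow> 'x \<Rightarrow> nat \<Rightarrow> real) \<Rightarrow> 'h" where
  "psi_cf Lam x y s n beta = (1/2) *\<^sub>R (\<Sum>r\<in>{1,2}. psi_fold Lam x y s n beta r)"

definition phi ::
  "('x \<Rightarrow> 'y \<Rightarrow> 'h::real_vector) \<Rightarrow> (nat \<Rightarrow> 'x) \<Rightarrow> (nat \<Rightarrow> 'y) \<Rightarrow> (nat \<Rightarrow> nat) \<Rightarrow> nat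
   \<Rightarrow> (nat \<Rightarrow> bool \<Rightarrow> 'x \<Rightarrow> nat \<Rightarrow> real) \<Rightarrow> (nat \<Rightarrow> 'x \<Rightarrow> real)
   \<Rightarrow> nat \<Rightarrow> 'x \<Rightarrow> bool \<Rightarrow> 'y \<Rightarrow> 'h" where
  "phi Lam x y s n beta pr r xi alpha eta =
     (of_bool alpha / pr r xi - (1 - of_bool alpha) / (1 - pr r xi)) *\<^sub>R
        (Lam xi eta - theta Lam y n beta r alpha xi)
     + theta Lam y n beta r True xi - theta Lam y n beta r False xi
     - psi_fold Lam x y s n beta r"

definition onestep_cf ::
  "('x \<Rightarrow> 'y \<Rightarrow> 'h::real_vector) \<Rightarrow> (nat \<Rightarrow> 'x) \<Rightarrow> (nat \<Rightarrow> bool) \<Rightarrow> (nat \<Rightarrow> 'y)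
   \<Rightarrow> (nat \<Rightarrow> nat) \<Rightarrow> nat \<Rightarrow> (nat \<Rightarrow> bool \<Rightarrow> 'x \<Rightarrow> nat \<Rightarrow> real) \<Rightarrow> (nat \<Rightarrow> 'x \<Rightarrow> real) \<Rightarrow> 'h" where
  "onestep_cf Lam x a y s n beta pr = (1/2) *\<^sub>R
     (\<Sum>r\<in>{1,2}. psi_fold Lam x y s n beta r
        + (1 / real (fsize s n (3 - r))) *\<^sub>R
            (\<Sum>i\<in>fold s n (3 - r). phi Lam x y s n beta pr r (x i) (a i) (y i)))"

definition Emat ::
  "(nat \<Rightarrow> 'x) \<Rightarrow> (nat \<Rightarrow> nat) \<Rightarrow> nat \<Rightarrow> (nat \<Rightarrow> bool \<Rightarrow> 'x \<Rightarrow> nat \<Rightarrow> real)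
   \<Rightarrow> nat \<Rightarrow> nat \<Rightarrow> real" where
  "Emat x s n beta i j =
     (if j = i then 0
      else 1 / (2 * real (fsize s n (s i))) *
        (beta (3 - s i) True (x i) j - beta (3 - s i) False (x i) j))"

definition Cmat ::
  "(nat \<Rightarrow> 'x) \<Rightarrow> (nat \<Rightarrow> bool) \<Rightarrow> (nat \<Rightarrow> nat) \<Rightarrow> nat \<Rightarrow> (nat \<Rightarrow> bool \<Rightarrow> 'x \<Rightarrow> nat \<Rightarrow> real)
   \<Rightarrow> (nat \<Rightarrow> 'x \<Rightarrow> real) \<Rightarrow> nat \<Rightarrow> nat \<Rightarrow> real" where
  "Cmat x a s n beta pr i j =
     (let w = pr (3 - s i) (x i); ai = of_bool (a i) :: real in
      if j = i then 1 / (2 * real (fsize s n (s i))) * (ai / w - (1 - ai) / (1 - w))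
      else 1 / (2 * real (fsize s n (s i))) *
        ((1 - ai / w) * beta (3 - s i) True (x i) j
         + ((1 - ai) / (1 - w) - 1) * beta (3 - s i) False (x i) j))"

end

theory Submission
  imports Defs
begin

text \<open>Since \<open>\<beta>\<^sup>r\<close> is supported on fold \<open>r\<close> while observation \<open>i\<close> lies in
  the other fold \<open>s(i) = 3 - r(i)\<close>, the diagonal weights \<open>[\<beta>\<^sup>r\<^sup>(\<^sup>i\<^sup>)\<^sub>a(x\<^sub>i)]\<^sub>i\<close> vanish.
  Hence row \<open>i\<close> of \<open>E\<close>, paired with the features \<open>\<Lambda>(x\<^sub>i, y\<^sub>j)\<close>, is
  \<open>(\<theta>\<^sub>1 - \<theta>\<^sub>0)(x\<^sub>i) / 2n\<^sub>s\<^sub>(\<^sub>i\<^sub>)\<close>, and row \<open>i\<close> of \<open>C\<close> is \<open>(\<phi>(z\<^sub>i) + \<psi>) / 2n\<^sub>s\<^sub>(\<^sub>i\<^sub>)\<close> for the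
  models of fold \<open>r(i)\<close>, the diagonal entry of \<open>C\<close> carrying the \<open>\<Lambda>(x\<^sub>i, y\<^sub>i)\<close> term
  of \<open>\<phi>\<close>. Summing the rows of one fold gives the fold averages.\<close>

lemma sum_lessThan_folds:
  assumes "\<forall>i<n. s i \<in> {1, 2}"
  shows "(\<Sum>i<n. f i) = (\<Sum>i\<in>fold s n 1. f i) + (\<Sum>i\<in>fold s n 2. (f i :: 'a::comm_monoid_add))"
proof -
  have "{..<n} = fold s n 1 \<union> fold s n 2" using assms by (auto simp: fold_def)
  moreover have "fold s n 1 \<inter> fold s n 2 = {}" by (auto simp: fold_def)
  moreover have "finite (fold s n k)" for k by (simp add: fold_def)
  ultimately show ?thesis by (simp add: sum.union_disjoint)
qed

lemma scaleR_average_add: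
  assumes "finite A" "A \<noteq> {}"
  shows "v + (1 / real (card A)) *\<^sub>R (\<Sum>i\<in>A. f i)
     = (1 / real (card A)) *\<^sub>R (\<Sum>i\<in>A. f i + (v :: 'a::real_vector))"
  using assms by (simp add: sum.distrib scaleR_add_right sum_constant_scaleR)

lemma phi_add_psi_fold:
  "phi Lam x y s n beta pr r \<xi> \<alpha> \<eta> + psi_fold Lam x y s n beta r
   = (of_bool \<alpha> / pr r \<xi> - (1 - of_bool \<alpha>) / (1 - pr r \<xi>)) *\<^sub>R Lam \<xi> \<eta>
     + (1 - of_bool \<alpha> / pr r \<xi>) *\<^sub>R theta Lam y n beta r True \<xi>
     + ((1 - of_bool \<alpha>) / (1 - pr r \<xi>) - 1) *\<^sub>R theta Lam y n beta r False \<xi>"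
  by (cases \<alpha>) (simp_all add: phi_def algebra_simps)

lemma Emat_row:
  assumes "\<And>b. beta (3 - s i) b (x i) i = 0"
  shows "(\<Sum>j<n. Emat x s n beta i j *\<^sub>R Lam (x i) (y j))
    = (1 / (2 * real (fsize s n (s i)))) *\<^sub>R
        (theta Lam y n beta (3 - s i) True (x i) - theta Lam y n beta (3 - s i) False (x i))"
proof -
  define c where "c = 1 / (2 * real (fsize s n (s i)))"
  have "Emat x s n beta i j = c * (beta (3 - s i) True (x i) j - beta (3 - s i) False (x i) j)" for j
    using assms by (simp add: Emat_def c_def)
  then have "(\<Sum>j<n. Emat x s n beta i j *\<^sub>R Lam (x i) (y j))
      = (\<Sum>j<n. (c * (beta (3 - s i) True (x i) j - beta (3 - s i) False (x i) j)) *\<^sub>R Lam (x i) (y j))"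
    by simp
  then show ?thesis
    by (simp add: c_def theta_def scaleR_sum_right sum_subtractf[symmetric] scaleR_diff_left
        scaleR_diff_right diff_divide_distrib)
qed

lemma Cmat_row:
  assumes "\<And>b. beta (3 - s i) b (x i) i = 0" and "i < n"
  shows "(\<Sum>j<n. Cmat x a s n beta pr i j *\<^sub>R Lam (x i) (y j))
    = (1 / (2 * real (fsize s n (s i)))) *\<^sub>R
        (phi Lam x y s n beta pr (3 - s i) (x i) (a i) (y i) + psi_fold Lam x y s n beta (3 - s i))"
proof -
  define r where "r = 3 - s i"
  define c where "c = 1 / (2 * real (fsize s n (s i)))"
  define w where "w = pr r (x i)"
  define ai where "ai = (of_bool (a i) :: real)"
  have C: "Cmat x a s n beta pr i j = c * (if j = i then ai / w - (1 - ai) / (1 - w) else 0)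
     + c * (1 - ai / w) * beta r True (x i) j + c * ((1 - ai) / (1 - w) - 1) * beta r False (x i) j" for j
    using assms(1) by (auto simp: Cmat_def Let_def r_def c_def w_def ai_def algebra_simps)
  have diagonal: "(\<Sum>j<n. (c * (if j = i then ai / w - (1 - ai) / (1 - w) else 0)) *\<^sub>R Lam (x i) (y j))
      = (c * (ai / w - (1 - ai) / (1 - w))) *\<^sub>R Lam (x i) (y i)"
    using assms(2) by (simp add: if_distrib if_distribR cong: if_cong)
  show ?thesis
    unfolding C phi_add_psi_fold
    by (simp add: scaleR_add_left sum.distrib diagonal flip: r_def c_def w_def ai_def)
       (simp add: theta_def scaleR_sum_right scaleR_add_right mult.assoc)
qed

lemma fold_sum_Emat_rows:
  assumes "r \<in> {1, 2}" and "\<And>i b. i \<in> fold s n (3 - r) \<Longrightarrow> beta r b (x i) i = 0"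
  shows "(\<Sum>i\<in>fold s n (3 - r). \<Sum>j<n. Emat x s n beta i j *\<^sub>R Lam (x i) (y j))
      = (1/2) *\<^sub>R psi_fold Lam x y s n beta r"
proof -
  have "(\<Sum>i\<in>fold s n (3 - r). \<Sum>j<n. Emat x s n beta i j *\<^sub>R Lam (x i) (y j))
      = (\<Sum>i\<in>fold s n (3 - r). (1 / (2 * real (fsize s n (3 - r)))) *\<^sub>R
          (theta Lam y n beta r True (x i) - theta Lam y n beta r False (x i)))"
  proof (rule sum.cong)
    fix i assume i: "i \<in> fold s n (3 - r)"
    then have "3 - s i = r" using assms(1) by (auto simp: fold_def)
    with Emat_row[of beta s i x n Lam y] assms(2)[OF i] i
    show "(\<Sum>j<n. Emat x s n beta i j *\<^sub>R Lam (x i) (y j)) = (1 / (2 * real (fsize s n (3 - r)))) *\<^sub>R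
          (theta Lam y n beta r True (x i) - theta Lam y n beta r False (x i))"
      by (simp add: fold_def)
  qed simp
  then show ?thesis
    using assms(1) by (auto simp: psi_fold_def scaleR_sum_right[symmetric])
qed

lemma fold_sum_Cmat_rows:
  assumes "r \<in> {1, 2}" and "\<And>i b. i \<in> fold s n (3 - r) \<Longrightarrow> beta r b (x i) i = 0"
    and "fsize s n (3 - r) > 0"
  shows "(\<Sum>i\<in>fold s n (3 - r). \<Sum>j<n. Cmat x a s n beta pr i j *\<^sub>R Lam (x i) (y j))
      = (1/2) *\<^sub>R (psi_fold Lam x y s n beta r + (1 / real (fsize s n (3 - r))) *\<^sub>R
            (\<Sum>i\<in>fold s n (3 - r). phi Lam x y s n beta pr r (x i) (a i) (y i)))"
proof -
  let ?I = "fold s n (3 - r)"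
  have "(\<Sum>i\<in>?I. \<Sum>j<n. Cmat x a s n beta pr i j *\<^sub>R Lam (x i) (y j))
      = (\<Sum>i\<in>?I. (1 / (2 * real (fsize s n (3 - r)))) *\<^sub>R
          (phi Lam x y s n beta pr r (x i) (a i) (y i) + psi_fold Lam x y s n beta r))"
  proof (rule sum.cong)
    fix i assume i: "i \<in> ?I"
    then have "3 - s i = r" using assms(1) by (auto simp: fold_def)
    with Cmat_row[of beta s i x n a pr Lam y] assms(2)[OF i] i
    show "(\<Sum>j<n. Cmat x a s n beta pr i j *\<^sub>R Lam (x i) (y j))
        = (1 / (2 * real (fsize s n (3 - r)))) *\<^sub>R
          (phi Lam x y s n beta pr r (x i) (a i) (y i) + psi_fold Lam x y s n beta r)"
      by (simp add: fold_def)
  qed simp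
  also have "\<dots> = (1/2) *\<^sub>R ((1 / real (card ?I)) *\<^sub>R
      (\<Sum>i\<in>?I. phi Lam x y s n beta pr r (x i) (a i) (y i) + psi_fold Lam x y s n beta r))"
    by (simp add: fsize_def scaleR_sum_right[symmetric])
  also have "\<dots> = (1/2) *\<^sub>R (psi_fold Lam x y s n beta r + (1 / real (fsize s n (3 - r))) *\<^sub>R
            (\<Sum>i\<in>?I. phi Lam x y s n beta pr r (x i) (a i) (y i)))"
    using assms(3)
      scaleR_average_add[of ?I "psi_fold Lam x y s n beta r" "\<lambda>i. phi Lam x y s n beta pr r (x i) (a i) (y i)"]
    by (simp add: fsize_def card_gt_0_iff)
  finally show ?thesis .
qed

theorem lemmaH1:
  fixes Lam :: "'x \<Rightarrow> 'y \<Rightarrow> 'h::real_vector"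
    and x :: "nat \<Rightarrow> 'x" and a :: "nat \<Rightarrow> bool" and y :: "nat \<Rightarrow> 'y"
    and s :: "nat \<Rightarrow> nat" and n :: nat
    and pr :: "nat \<Rightarrow> 'x \<Rightarrow> real"
    and beta :: "nat \<Rightarrow> bool \<Rightarrow> 'x \<Rightarrow> nat \<Rightarrow> real"
  assumes folds: "\<forall>i<n. s i \<in> {1, 2}"
    and nonempty1: "fsize s n 1 > 0" and nonempty2: "fsize s n 2 > 0"
    and pi_range: "\<forall>r\<in>{1, 2}. \<forall>\<xi>. 0 < pr r \<xi> \<and> pr r \<xi> < 1"
    and beta_support: "\<forall>r\<in>{1, 2}. \<forall>\<alpha> \<xi> j.
        (j \<notin> fold s n r \<or> a j \<noteq> \<alpha>) \<longrightarrow> beta r \<alpha> \<xi> j = 0"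
  shows "psi_cf Lam x y s n beta = (\<Sum>i<n. \<Sum>j<n. Emat x s n beta i j *\<^sub>R Lam (x i) (y j))
     \<and> onestep_cf Lam x a y s n beta pr
         = (\<Sum>i<n. \<Sum>j<n. Cmat x a s n beta pr i j *\<^sub>R Lam (x i) (y j))"
proof -
  have diagonal_zero: "beta r b (x i) i = 0" if "r \<in> {1, 2}" "i \<in> fold s n (3 - r)" for r i b
    using beta_support that by (auto simp: fold_def)
  note E = fold_sum_Emat_rows[of _ s n beta x Lam y, OF _ diagonal_zero]
  note C = fold_sum_Cmat_rows[of _ s n beta x a pr Lam y, OF _ diagonal_zero]
  show ?thesis
    using E[of 1] E[of 2] C[of 1] C[of 2] nonempty1 nonempty2
    by (simp add: sum_lessThan_folds[OF folds] psi_cf_def onestep_cf_def algebra_simps)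
qed

end
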